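(* Let $r\ge 1$ and $\mathbf{s}\in\mathbb{Z}^r$. Suppose $\boldsymbol{\lambda},\boldsymbol{\mu}\in\Lambda^{(r)}$ satisfy $(\boldsymbol{\lambda},\mathbf{s})\approx_e(\boldsymbol{\mu},\mathbf{s})$. Then $\Psi_r(\boldsymbol{\lambda},\mathbf{s})\approx_e\Psi_r(\boldsymbol{\mu},\mathbf{s})$ in $\mathcal{A}_e$.
   Context: Fix an integer $e\ge 2$. A partition is a weakly decreasing sequence $\lambda=(\lambda_1,\lambda_2,\dots)$ of non-negative integers with finite sum $|\lambda|$; $\Lambda$ denotes the set of partitions and $\Lambda^{(m)}$ the set of $m$-multipartitions, i.e. $m$-tuples $\boldsymbol\lambda=(\lambda^{(1)},\dots,\lambda^{(m)})$ of partitions, with $|\boldsymbol\lambda|=\sum_k|\lambda^{(k)}|$. A $\beta$-set is a subset $B\subseteq\mathbb{Z}$ containing all sufficiently small integers and no sufficiently large ones. For $\lambda\in\Lambda$ and $s\in\mathbb{Z}$ set $B_s(\lambda)=\{\lambda_i-i+s : i\ge 1\}$; every $\beta$-set equals $B_s(\lambda)$ for a unique pair $(\lambda,s)$. For $N\ge 2$ let $\mathcal{A}_N=\Lambda\times\mathbb{Z}$ (abacus configurations with $N$ runners: a bead at each position $b\in B_s(\lambda)$, position $b=aN+i$, $0\le i<N$, lying on runner $i$) and $\mathcal{A}_N^m=\Lambda^{(m)}\times\mathbb{Z}^m$, where $(\boldsymbol\lambda,\mathbf{s})$ is identified with the $m$-tuple of $\beta$-sets $(B_{s_1}(\lambda^{(1)}),\dots,B_{s_m}(\lambda^{(m)}))$.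 Blocks: for $(\boldsymbol\lambda,\mathbf{s})\in\mathcal{A}_N^m$, its $N$-residue multiset is the multiset of the values $s_k+y-x \bmod N$ over all nodes $(x,y,k)$ with $x\ge1$, $1\le y\le\lambda^{(k)}_x$, $1\le k\le m$. Define $(\boldsymbol\lambda,\mathbf{s})\approx_N(\boldsymbol\mu,\mathbf{s}')$ iff $\mathbf{s}=\mathbf{s}'$, $|\boldsymbol\lambda|=|\boldsymbol\mu|$ and the $N$-residue multisets coincide. Its equivalence classes are called blocks. (For $N=e$ these are exactly the sets of multipartitions indexing Specht modules in a common block of the Ariki–Koike algebra $\mathcal{H}_{m,n}(q,(q^{s_1},\dots,q^{s_m}))$, $q$ a primitive $e$-th root of unity.) Uglov's map: for $1\le k\le r$ define $\psi_k:\mathbb{Z}\to\mathbb{Z}$ by $\psi_k(ae+i)=((a+1)r-k)e+i$ for $a\in\mathbb{Z}$, $0\le i<e$. For $(\boldsymbol\lambda,\mathbf{s})\in\mathcal{A}_e^r$ the set $B=\bigsqcup_{k=1}^r\psi_k(B_{s_k}(\lambda^{(k)}))$ is a $\beta$-set, and $\Psi_r(\boldsymbol\lambda,\mathbf{s})$ is the unique $(\tilde\lambda,\tilde s)\in\mathcal{A}_e$ with $B_{\tilde s}(\tilde\lambda)=B$. $\Psi_r:\mathcal{A}_e^r\to\mathcal{A}_e$ is a bijection; $\Phi_r=\Psi_r^{-1}$. *)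

theory Defs
  imports Main "HOL-Library.Multiset"
begin

text \<open>Partitions are functions nat => nat, 0-indexed: la i is the part lambda_(i+1).
  Multipartitions with m components are functions nat => (nat => nat), components k < m
  (0-indexed: lam k is lambda^(k+1)); charges are s :: nat => int with s k = s_(k+1).\<close>

definition is_partition :: "(nat \<Rightarrow> nat) \<Rightarrow> bool" where
  "is_partition la \<longleftrightarrow> (\<forall>i j. i \<le> j \<longrightarrow> la j \<le> la i) \<and> finite {i. la i \<noteq> 0}"

definition is_multipartition :: "nat \<Rightarrow> (nat \<Rightarrow> nat \<Rightarrow> nat) \<Rightarrow> bool" where
  "is_multipartition m lam \<longleftrightarrow> (\<forall>k<m. is_partition (lam k))"

definition part_size :: "(nat \<Rightarrow> nat) \<Rightarrow> nat" where
  "part_size la = (\<Sum>i\<in>{i. la i \<noteq> 0}. la i)"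

definition multi_size :: "nat \<Rightarrow> (nat \<Rightarrow> nat \<Rightarrow> nat) \<Rightarrow> nat" where
  "multi_size m lam = (\<Sum>k<m. part_size (lam k))"

definition beta_set :: "int \<Rightarrow> (nat \<Rightarrow> nat) \<Rightarrow> int set" where
  "beta_set s la = {int (la j) - int (j + 1) + s | j. True}"

definition nodes :: "nat \<Rightarrow> (nat \<Rightarrow> nat \<Rightarrow> nat) \<Rightarrow> (nat \<times> nat \<times> nat) set" where
  "nodes m lam = {(x, y, k). k < m \<and> 1 \<le> x \<and> 1 \<le> y \<and> y \<le> lam k (x - 1)}"

definition residues :: "nat \<Rightarrow> nat \<Rightarrow> (nat \<Rightarrow> nat \<Rightarrow> nat) \<Rightarrow> (nat \<Rightarrow> int) \<Rightarrow> int multiset" where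
  "residues N m lam s =
     image_mset (\<lambda>(x, y, k). (s k + int y - int x) mod int N) (mset_set (nodes m lam))"

definition block_equiv ::
  "nat \<Rightarrow> nat \<Rightarrow> (nat \<Rightarrow> nat \<Rightarrow> nat) \<times> (nat \<Rightarrow> int) \<Rightarrow> (nat \<Rightarrow> nat \<Rightarrow> nat) \<times> (nat \<Rightarrow> int) \<Rightarrow> bool" where
  "block_equiv N m A B \<longleftrightarrow>
     (case A of (lam, s) \<Rightarrow> case B of (mu, s') \<Rightarrow>
        is_multipartition m lam \<and> is_multipartition m mu \<and>
        (\<forall>k<m. s k = s' k) \<and>
        multi_size m lam = multi_size m mu \<and>
        residues N m lam s = residues N m mu s)"

text \<open>psi_k(a e + i) = ((a+1) r - k) e + i, for 1 <= k <= r, 0 <= i < e.\<close>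
definition uglov_psi :: "nat \<Rightarrow> nat \<Rightarrow> nat \<Rightarrow> int \<Rightarrow> int" where
  "uglov_psi e r k b = ((b div int e + 1) * int r - int k) * int e + b mod int e"

definition uglov_beta :: "nat \<Rightarrow> nat \<Rightarrow> (nat \<Rightarrow> nat \<Rightarrow> nat) \<Rightarrow> (nat \<Rightarrow> int) \<Rightarrow> int set" where
  "uglov_beta e r lam s = (\<Union>k<r. uglov_psi e r (k + 1) ` beta_set (s k) (lam k))"

definition uglov_Psi :: "nat \<Rightarrow> nat \<Rightarrow> (nat \<Rightarrow> nat \<Rightarrow> nat) \<Rightarrow> (nat \<Rightarrow> int) \<Rightarrow> (nat \<Rightarrow> nat) \<times> int" where
  "uglov_Psi e r lam s =
     (THE p. is_partition (fst p) \<and> beta_set (snd p) (fst p) = uglov_beta e r lam s)"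

text \<open>A_e is identified with A_e^1.\<close>
definition as_single :: "(nat \<Rightarrow> nat) \<times> int \<Rightarrow> (nat \<Rightarrow> nat \<Rightarrow> nat) \<times> (nat \<Rightarrow> int)" where
  "as_single p = ((\<lambda>_. fst p), (\<lambda>_. snd p))"

end

theory Submission
  imports Defs
begin

text \<open>Let \<open>B\<close> be the \<open>\<beta>\<close>-set of \<open>(\<lambda>, t)\<close> and let every integer below \<open>M\<close> lie in \<open>B\<close>.
  Counting row by row, the number of nodes of \<open>\<lambda>\<close> of residue \<open>v\<close> is the sum of
  \<open>\<lfloor>(b - v) / e\<rfloor>\<close> over the beads \<open>b \<ge> M\<close> of \<open>B\<close>, minus the same sum over \<open>M \<le> b < t\<close>.
  Uglov's map moves a bead \<open>b\<close> of component \<open>k\<close> to \<open>\<psi>\<^sub>k(b)\<close>, and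
  \<open>\<lfloor>(\<psi>\<^sub>k(b) - v) / e\<rfloor> = \<lfloor>(b - v) / e\<rfloor> + (r - 1) \<lfloor>b / e\<rfloor> + (r - k)\<close>; moreover the
  charge of \<open>\<Psi>\<^sub>r(\<lambda>, s)\<close> is the total charge of \<open>s\<close>. Summing over the beads, the number of
  residue-\<open>v\<close> nodes of \<open>\<Psi>\<^sub>r(\<lambda>, s)\<close> is that of \<open>\<lambda>\<close>, plus \<open>r - 1\<close> times the number of
  residue-\<open>0\<close> nodes of \<open>\<lambda>\<close>, plus a term depending on \<open>s\<close> alone. Hence the residue multiset
  of \<open>\<Psi>\<^sub>r(\<lambda>, s)\<close>, and with it its size, depends only on the block of \<open>(\<lambda>, s)\<close>.\<close>

section \<open>\<open>\<beta>\<close>-sets\<close>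

text \<open>\<open>bead t la j\<close> is the \<open>(j + 1)\<close>-st largest element of \<open>beta_set t la\<close>.\<close>
definition bead :: "int \<Rightarrow> (nat \<Rightarrow> nat) \<Rightarrow> nat \<Rightarrow> int" where
  "bead t la j = int (la j) - int (j + 1) + t"

lemma beta_set_eq_range_bead: "beta_set t la = range (bead t la)"
  by (auto simp: beta_set_def bead_def)

lemma is_multipartition_eventually_zero:
  assumes "is_multipartition r lam"
  shows "\<exists>X. \<forall>k<r. \<forall>x\<ge>X. lam k x = 0"
proof -
  have "finite (\<Union>k<r. {i. lam k i \<noteq> 0})"
    using assms by (auto simp: is_multipartition_def is_partition_def)
  then obtain X where X: "\<forall>i\<in>(\<Union>k<r. {i. lam k i \<noteq> 0}). i < X"
    by (auto simp: finite_nat_set_iff_bounded)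
  have "\<forall>k<r. \<forall>x\<ge>X. lam k x = 0"
  proof (intro allI impI)
    fix k x assume "k < r" "X \<le> x"
    then show "lam k x = 0" using X by (auto simp: not_less[symmetric])
  qed
  then show ?thesis ..
qed

lemma is_partition_eventually_zero:
  assumes "is_partition la"
  shows "\<exists>X. \<forall>x\<ge>X. la x = 0"
  using is_multipartition_eventually_zero[of 1 "\<lambda>_. la"] assms
  by (simp add: is_multipartition_def)

lemma bead_strict_antimono:
  assumes "is_partition la" "x < y"
  shows "bead t la y < bead t la x"
proof -
  have "la y \<le> la x" using assms by (simp add: is_partition_def)
  then show ?thesis using assms(2) by (simp add: bead_def)
qed

lemma bead_antimono: "is_partition la \<Longrightarrow> x \<le> y \<Longrightarrow> bead t la y \<le> bead t la x"
  using bead_strict_antimono[of la x y t] by (cases "x = y") auto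

lemma inj_bead: "is_partition la \<Longrightarrow> inj (bead t la)"
  by (metis bead_strict_antimono injI less_irrefl nat_neq_iff)

lemma bead_zero_part: "la x = 0 \<Longrightarrow> bead t la x = t - int x - 1"
  by (simp add: bead_def)

lemma beta_set_contains_below:
  assumes "\<forall>x\<ge>X. la x = 0" "z < t - int X"
  shows "z \<in> beta_set t la"
proof -
  have "bead t la (nat (t - 1 - z)) = z"
    using assms by (simp add: bead_zero_part)
  then show ?thesis by (metis beta_set_eq_range_bead rangeI)
qed

lemma beta_set_above_eq:
  assumes "\<forall>x\<ge>X. la x = 0" "M \<le> t - int X"
  shows "{b \<in> beta_set t la. M \<le> b} = bead t la ` {..<X} \<union> {M..<t - int X}"
proof (intro equalityI subsetI)
  fix b assume b: "b \<in> {b \<in> beta_set t la. M \<le> b}"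
  then obtain j where j: "b = bead t la j" by (auto simp: beta_set_eq_range_bead)
  show "b \<in> bead t la ` {..<X} \<union> {M..<t - int X}"
  proof (cases "j < X")
    case False
    then show ?thesis using j b assms(1) by (auto simp: bead_zero_part)
  qed (use j in auto)
next
  fix b assume "b \<in> bead t la ` {..<X} \<union> {M..<t - int X}"
  then show "b \<in> {b \<in> beta_set t la. M \<le> b}"
    using assms beta_set_contains_below[OF assms(1)]
    by (auto simp: bead_def beta_set_eq_range_bead)
qed

lemma finite_beta_set_above:
  assumes "is_partition la"
  shows "finite {b \<in> beta_set t la. M \<le> b}"
proof -
  obtain X where X: "\<forall>x\<ge>X. la x = 0" using is_partition_eventually_zero[OF assms] by blast
  have "{b \<in> beta_set t la. M \<le> b} \<subseteq> {b \<in> beta_set t la. min M (t - int X) \<le> b}" by auto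
  then show ?thesis by (rule finite_subset) (simp add: beta_set_above_eq[OF X])
qed

text \<open>The beads on positions \<open>\<ge> t - X\<close> are among the first \<open>X\<close>, so they cannot fill
  the \<open>X + 1\<close> positions \<open>t - X, \<dots>, t\<close>.\<close>
lemma beta_set_cutoff_le_charge:
  assumes "is_partition la" "\<forall>z<M. z \<in> beta_set t la"
  shows "M \<le> t"
proof (rule ccontr)
  assume "\<not> M \<le> t"
  obtain X where X: "\<forall>x\<ge>X. la x = 0" using is_partition_eventually_zero[OF assms(1)] by blast
  have "{t - int X..t} \<subseteq> {b \<in> beta_set t la. t - int X \<le> b}"
    using assms(2) \<open>\<not> M \<le> t\<close> by auto
  also have "\<dots> = bead t la ` {..<X}" using beta_set_above_eq[OF X] by simp
  finally have "card {t - int X..t} \<le> card (bead t la ` {..<X})"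
    by (rule card_mono[rotated]) simp
  also have "\<dots> \<le> X" using card_image_le[of "{..<X}" "bead t la"] by simp
  finally show False by simp
qed

lemma sum_above_shift:
  fixes g :: "int \<Rightarrow> 'a::comm_monoid_add"
  assumes "\<forall>z<M. z \<in> U" "M' \<le> M" "finite {b \<in> U. M \<le> b}"
  shows "(\<Sum>b\<in>{b \<in> U. M' \<le> b}. g b) = (\<Sum>b\<in>{b \<in> U. M \<le> b}. g b) + (\<Sum>b\<in>{M'..<M}. g b)"
proof -
  have "{b \<in> U. M' \<le> b} = {b \<in> U. M \<le> b} \<union> {M'..<M}" using assms by auto
  then show ?thesis by (simp only:) (rule sum.union_disjoint, use assms in auto)
qed

lemma sum_int_interval_split:
  fixes l m u :: int
  assumes "l \<le> m" "m \<le> u"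
  shows "(\<Sum>b\<in>{l..<u}. g b) = (\<Sum>b\<in>{l..<m}. g b) + (\<Sum>b\<in>{m..<u}. g b)"
  using assms by (simp add: sum.union_disjoint[symmetric] ivl_disj_un)

lemma sum_beta_set_above:
  fixes g :: "int \<Rightarrow> 'a::comm_monoid_add"
  assumes "is_partition la" "\<forall>x\<ge>X. la x = 0" "M \<le> t - int X"
  shows "(\<Sum>b\<in>{b \<in> beta_set t la. M \<le> b}. g b)
       = (\<Sum>b\<in>{M..<t - int X}. g b) + (\<Sum>x<X. g (bead t la x))"
proof -
  have "bead t la ` {..<X} \<inter> {M..<t - int X} = {}" by (auto simp: bead_def)
  moreover have "(\<Sum>b\<in>bead t la ` {..<X}. g b) = (\<Sum>x<X. g (bead t la x))"
    using inj_on_subset[OF inj_bead[OF assms(1)]] by (simp add: sum.reindex)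
  ultimately show ?thesis
    by (simp add: beta_set_above_eq[OF assms(2,3)] sum.union_disjoint add.commute)
qed

lemma sum_int_interval_below:
  fixes t :: int
  shows "(\<Sum>b\<in>{t - int X..<t}. g b) = (\<Sum>x<X. g (t - int x - 1))"
proof -
  have "{t - int X..<t} = (\<lambda>x. t - int x - 1) ` {..<X}"
  proof (intro equalityI subsetI)
    fix b assume "b \<in> {t - int X..<t}"
    then have "b = t - int (nat (t - 1 - b)) - 1" "nat (t - 1 - b) < X" by auto
    then show "b \<in> (\<lambda>x. t - int x - 1) ` {..<X}" by blast
  qed auto
  then show ?thesis by (simp add: sum.reindex inj_on_def)
qed

text \<open>Row \<open>x\<close> contributes the difference between its bead and the bead \<open>t - x - 1\<close> of the
  empty partition in the same row.\<close>
lemma sum_beta_set_above_minus_interval: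
  fixes g :: "int \<Rightarrow> 'a::ab_group_add"
  assumes "is_partition la" "\<forall>x\<ge>X. la x = 0" "\<forall>z<M. z \<in> beta_set t la"
  shows "(\<Sum>b\<in>{b \<in> beta_set t la. M \<le> b}. g b) - (\<Sum>b\<in>{M..<t}. g b)
       = (\<Sum>x<X. g (bead t la x) - g (t - int x - 1))"
proof -
  define M' where "M' = min M (t - int X)"
  have "M' \<le> M" "M' \<le> t - int X" "M \<le> t"
    using beta_set_cutoff_le_charge[OF assms(1,3)] by (simp_all add: M'_def)
  have "(\<Sum>b\<in>{b \<in> beta_set t la. M \<le> b}. g b) + (\<Sum>b\<in>{M'..<M}. g b)
      = (\<Sum>b\<in>{b \<in> beta_set t la. M' \<le> b}. g b)"
    using assms(3) finite_beta_set_above[OF assms(1)] \<open>M' \<le> M\<close> by (intro sum_above_shift[symmetric])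
  also have "\<dots> = (\<Sum>b\<in>{M'..<t - int X}. g b) + (\<Sum>x<X. g (bead t la x))"
    by (rule sum_beta_set_above[OF assms(1,2) \<open>M' \<le> t - int X\<close>])
  finally have lhs: "(\<Sum>b\<in>{b \<in> beta_set t la. M \<le> b}. g b) + (\<Sum>b\<in>{M'..<M}. g b)
      = (\<Sum>b\<in>{M'..<t - int X}. g b) + (\<Sum>x<X. g (bead t la x))" .
  have "(\<Sum>b\<in>{M..<t}. g b) + (\<Sum>b\<in>{M'..<M}. g b) = (\<Sum>b\<in>{M'..<t}. g b)"
    using sum_int_interval_split[of M' M t g] \<open>M' \<le> M\<close> \<open>M \<le> t\<close> by (simp add: add.commute)
  also have "\<dots> = (\<Sum>b\<in>{M'..<t - int X}. g b) + (\<Sum>x<X. g (t - int x - 1))"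
    using sum_int_interval_split[of M' "t - int X" t g] \<open>M' \<le> t - int X\<close>
    by (simp add: sum_int_interval_below)
  finally have rhs: "(\<Sum>b\<in>{M..<t}. g b) + (\<Sum>b\<in>{M'..<M}. g b)
      = (\<Sum>b\<in>{M'..<t - int X}. g b) + (\<Sum>x<X. g (t - int x - 1))" .
  have "(\<Sum>b\<in>{b \<in> beta_set t la. M \<le> b}. g b) - (\<Sum>b\<in>{M..<t}. g b)
      = ((\<Sum>b\<in>{b \<in> beta_set t la. M \<le> b}. g b) + (\<Sum>b\<in>{M'..<M}. g b))
        - ((\<Sum>b\<in>{M..<t}. g b) + (\<Sum>b\<in>{M'..<M}. g b))" by simp
  also have "\<dots> = (\<Sum>x<X. g (bead t la x)) - (\<Sum>x<X. g (t - int x - 1))"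
    unfolding lhs rhs by simp
  finally show ?thesis by (simp add: sum_subtractf)
qed

lemma card_beta_set_above:
  assumes "is_partition la" "\<forall>z<M. z \<in> beta_set t la"
  shows "int (card {b \<in> beta_set t la. M \<le> b}) = t - M"
proof -
  obtain X where X: "\<forall>x\<ge>X. la x = 0" using is_partition_eventually_zero[OF assms(1)] by blast
  show ?thesis
    using sum_beta_set_above_minus_interval[OF assms(1) X assms(2), of "\<lambda>_. 1 :: int"]
      beta_set_cutoff_le_charge[OF assms] by simp
qed

lemma card_beta_set_greater_bead:
  assumes "is_partition la"
  shows "card {z \<in> beta_set t la. bead t la x < z} = x"
proof -
  have "{z \<in> beta_set t la. bead t la x < z} = bead t la ` {..<x}"
  proof (intro equalityI subsetI)
    fix z assume "z \<in> {z \<in> beta_set t la. bead t la x < z}"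
    then obtain y where y: "z = bead t la y" "bead t la x < bead t la y"
      by (auto simp: beta_set_eq_range_bead)
    then have "y < x" using bead_antimono[OF assms, of x y t] by (cases "x \<le> y") simp_all
    then show "z \<in> bead t la ` {..<x}" using y by simp
  qed (auto simp: beta_set_eq_range_bead bead_strict_antimono[OF assms])
  then show ?thesis by (simp add: card_image inj_on_subset[OF inj_bead[OF assms]])
qed

lemma beta_set_inject:
  assumes "is_partition la" "is_partition la'" "beta_set t la = beta_set t' la'"
  shows "la = la' \<and> t = t'"
proof -
  obtain X where X: "\<forall>x\<ge>X. la x = 0" using is_partition_eventually_zero[OF assms(1)] by blast
  obtain X' where X': "\<forall>x\<ge>X'. la' x = 0" using is_partition_eventually_zero[OF assms(2)] by blast
  define M where "M = min (t - int X) (t' - int X')"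
  have "\<forall>z<M. z \<in> beta_set t la" "\<forall>z<M. z \<in> beta_set t' la'"
    using beta_set_contains_below[OF X] beta_set_contains_below[OF X'] by (auto simp: M_def)
  then have "t - M = t' - M"
    using card_beta_set_above[OF assms(1), of M t] card_beta_set_above[OF assms(2), of M t']
      assms(3) by simp
  then have t: "t = t'" by simp
  have "la x = la' x" for x
  proof -
    obtain y where y: "bead t la x = bead t' la' y"
      using assms(3) by (auto simp: beta_set_eq_range_bead)
    then have "x = y"
      using card_beta_set_greater_bead[OF assms(1), of t x]
        card_beta_set_greater_bead[OF assms(2), of t' y] assms(3) by simp
    then show ?thesis using y t by (simp add: bead_def)
  qed
  then show ?thesis using t by auto
qed

lemma strict_antimono_add_index:
  fixes bd :: "nat \<Rightarrow> int"
  assumes "\<And>i j. i < j \<Longrightarrow> bd j < bd i" "i \<le> j"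
  shows "bd j + int j \<le> bd i + int i"
  using assms(2)
proof (induction j rule: dec_induct)
  case (step n)
  then show ?case using assms(1)[of n "Suc n"] by simp
qed simp

lemma beta_set_of_strict_antimono:
  fixes bd :: "nat \<Rightarrow> int"
  assumes dec: "\<And>i j. i < j \<Longrightarrow> bd j < bd i" and tail: "\<And>x. n \<le> x \<Longrightarrow> bd x = t - int x - 1"
  defines "la \<equiv> \<lambda>x. nat (bd x + int x + 1 - t)"
  shows "is_partition la" "beta_set t la = range bd"
proof -
  have "t \<le> bd x + int x + 1" for x
    using strict_antimono_add_index[of bd x "max x n", OF dec] tail[of "max x n"] by simp
  then have "int (la x) = bd x + int x + 1 - t" for x
    by (simp add: la_def)
  then have "bead t la = bd" by (simp add: bead_def fun_eq_iff)
  then show "beta_set t la = range bd" by (simp add: beta_set_eq_range_bead)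
  have "la j \<le> la i" if "i \<le> j" for i j
    using strict_antimono_add_index[of bd, OF dec that] by (simp add: la_def nat_mono)
  moreover have "{i. la i \<noteq> 0} \<subseteq> {..<n}"
  proof
    fix i assume "i \<in> {i. la i \<noteq> 0}"
    then show "i \<in> {..<n}" using tail[of i] by (cases "n \<le> i") (auto simp: la_def)
  qed
  ultimately show "is_partition la"
    by (auto simp: is_partition_def intro: finite_subset)
qed

lemma ex_beta_set:
  assumes low: "\<forall>z<M. z \<in> B" and fin: "finite {b \<in> B. M \<le> b}"
  shows "\<exists>la t. is_partition la \<and> beta_set t la = B"
proof -
  define xs where "xs = rev (sorted_list_of_set {b \<in> B. M \<le> b})"
  define n where "n = length xs"
  have set_xs: "set xs = {b \<in> B. M \<le> b}" using fin by (simp add: xs_def)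
  have xs_dec: "xs ! j < xs ! i" if "i < j" "j < n" for i j
    using that sorted_wrt_iff_nth_less[of "(>)" xs] strict_sorted_list_of_set[of "{b \<in> B. M \<le> b}"]
    by (simp add: xs_def n_def sorted_wrt_rev)
  have xs_above: "M \<le> xs ! i" if "i < n" for i
    using that set_xs nth_mem[of i xs] by (auto simp: n_def)
  define bd where "bd x = (if x < n then xs ! x else M - 1 - int (x - n))" for x
  have "bd j < bd i" if "i < j" for i j
    using that xs_dec xs_above[of i] by (auto simp: bd_def)
  moreover have "bd x = (M + int n) - int x - 1" if "n \<le> x" for x
    using that by (simp add: bd_def)
  moreover have "range bd = B"
  proof (intro equalityI subsetI)
    fix z assume "z \<in> range bd"
    then show "z \<in> B" using low set_xs nth_mem[of _ xs] by (auto simp: bd_def n_def split: if_splits)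
  next
    fix z assume z: "z \<in> B"
    show "z \<in> range bd"
    proof (cases "M \<le> z")
      case True
      then have "z \<in> set xs" using z set_xs by simp
      then obtain i where "i < n" "xs ! i = z" by (auto simp: in_set_conv_nth n_def)
      then have "bd i = z" by (simp add: bd_def)
      then show ?thesis by (rule range_eqI[OF sym])
    next
      case False
      then have "bd (n + nat (M - 1 - z)) = z" by (simp add: bd_def)
      then show ?thesis by (rule range_eqI[OF sym])
    qed
  qed
  ultimately show ?thesis using beta_set_of_strict_antimono[of bd n "M + int n"] by blast
qed

lemma ex1_beta_set_pair:
  assumes "\<forall>z<M. z \<in> B" "finite {b \<in> B. M \<le> b}"
  shows "\<exists>!p. is_partition (fst p) \<and> beta_set (snd p) (fst p) = B"
proof -
  obtain la t where "is_partition la" "beta_set t la = B" using ex_beta_set[OF assms] by blast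
  then show ?thesis
    by (intro ex1I[of _ "(la, t)"]) (auto dest: beta_set_inject[of _ la])
qed

section \<open>Residue counts\<close>

abbreviation part_residues :: "nat \<Rightarrow> (nat \<Rightarrow> nat) \<Rightarrow> int \<Rightarrow> int multiset" where
  "part_residues e la t \<equiv> residues e 1 (\<lambda>_. la) (\<lambda>_. t)"

lemma zdiv_add_one:
  fixes n e :: int assumes "e > 0"
  shows "(n + 1) div e = n div e + (if (n + 1) mod e = 0 then 1 else 0)"
proof -
  define m where "m = n mod e"
  have m: "0 \<le> m" "m < e" using assms by (auto simp: m_def)
  have n: "n + 1 = (m + 1) + n div e * e" by (simp add: m_def)
  have "(n + 1) div e = ((m + 1) + n div e * e) div e" "(n + 1) mod e = ((m + 1) + n div e * e) mod e"
    by (simp_all only: n[symmetric])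
  then have "(n + 1) div e = n div e + (m + 1) div e" "(n + 1) mod e = (m + 1) mod e"
    using assms by simp_all
  moreover have "(m + 1) div e = (if m + 1 = e then 1 else 0)" "(m + 1) mod e = (if m + 1 = e then 0 else m + 1)"
    using m by auto
  ultimately show ?thesis using m by auto
qed

lemma card_row_residue:
  fixes e :: nat and A v :: int
  assumes "e > 0" "0 \<le> v" "v < int e"
  shows "int (card {y::nat. 1 \<le> y \<and> y \<le> L \<and> (A + int y) mod int e = v})
         = (A + int L - v) div int e - (A - v) div int e"
proof (induction L)
  case (Suc L)
  let ?P = "\<lambda>y::nat. (A + int y) mod int e = v"
  have "{y::nat. 1 \<le> y \<and> y \<le> Suc L \<and> ?P y}
      = {y. 1 \<le> y \<and> y \<le> L \<and> ?P y} \<union> (if ?P (Suc L) then {Suc L} else {})"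
    by (auto simp: le_Suc_eq)
  moreover have "finite {y::nat. 1 \<le> y \<and> y \<le> L \<and> ?P y}" by (rule finite_subset[of _ "{..L}"]) auto
  ultimately have "card {y::nat. 1 \<le> y \<and> y \<le> Suc L \<and> ?P y}
       = card {y::nat. 1 \<le> y \<and> y \<le> L \<and> ?P y} + (if ?P (Suc L) then 1 else 0)"
    by auto
  moreover have "(A + int L - v + 1) mod int e = 0 \<longleftrightarrow> ?P (Suc L)"
  proof -
    have "(A + int L - v + 1) mod int e = 0 \<longleftrightarrow> (A + int (Suc L)) mod int e = v mod int e"
      by (simp add: mod_eq_dvd_iff algebra_simps flip: dvd_eq_mod_eq_0)
    then show ?thesis using assms by simp
  qed
  ultimately show ?case
    using Suc.IH zdiv_add_one[of "int e" "A + int L - v"] assms by (simp add: algebra_simps)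
qed simp

lemma card_nodes_filter:
  assumes "\<forall>k<m. \<forall>x\<ge>X. lam k x = 0"
  shows "card {n \<in> nodes m lam. P n} = (\<Sum>k<m. \<Sum>x<X. card {y. 1 \<le> y \<and> y \<le> lam k x \<and> P (x + 1, y, k)})"
    and "finite {n \<in> nodes m lam. P n}"
proof -
  define Y where "Y kx = {y. 1 \<le> y \<and> y \<le> lam (fst kx) (snd kx) \<and> P (snd kx + 1, y, fst kx)}" for kx
  define f where "f = (\<lambda>(kx :: nat \<times> nat, y :: nat). (snd kx + 1, y, fst kx))"
  have eq: "{n \<in> nodes m lam. P n} = f ` (SIGMA kx:{..<m} \<times> {..<X}. Y kx)"
  proof (intro equalityI subsetI)
    fix n assume "n \<in> {n \<in> nodes m lam. P n}"
    then obtain x y k where n: "n = (x, y, k)" "k < m" "1 \<le> x" "1 \<le> y" "y \<le> lam k (x - 1)" "P n"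
      by (auto simp: nodes_def)
    then have "x - 1 < X" using assms[rule_format, OF n(2), of "x - 1"] by (cases "X \<le> x - 1") auto
    then have "((k, x - 1), y) \<in> (SIGMA kx:{..<m} \<times> {..<X}. Y kx)" using n by (auto simp: Y_def)
    moreover have "f ((k, x - 1), y) = n" using n by (simp add: f_def)
    ultimately show "n \<in> f ` (SIGMA kx:{..<m} \<times> {..<X}. Y kx)" by (metis imageI)
  qed (auto simp: f_def Y_def nodes_def)
  have inj: "inj_on f (SIGMA kx:{..<m} \<times> {..<X}. Y kx)" by (auto simp: inj_on_def f_def)
  have finY: "finite (Y kx)" for kx unfolding Y_def by (rule finite_subset[of _ "{..lam _ _}"]) auto
  show "finite {n \<in> nodes m lam. P n}" unfolding eq using finY by auto
  have "card {n \<in> nodes m lam. P n} = (\<Sum>kx\<in>{..<m} \<times> {..<X}. card (Y kx))"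
    unfolding eq card_image[OF inj] by (rule card_SigmaI) (auto simp: finY)
  then show "card {n \<in> nodes m lam. P n} = (\<Sum>k<m. \<Sum>x<X. card {y. 1 \<le> y \<and> y \<le> lam k x \<and> P (x + 1, y, k)})"
    by (simp add: sum.cartesian_product split_def Y_def)
qed

lemma int_count_residues:
  assumes "\<forall>k<m. \<forall>x\<ge>X. lam k x = 0"
  shows "int (count (residues e m lam s) v)
     = (\<Sum>k<m. \<Sum>x<X. int (card {y. 1 \<le> y \<and> y \<le> lam k x \<and> (s k + int y - int (x + 1)) mod int e = v}))"
proof -
  define res where "res = (\<lambda>(x, y, k). (s k + int y - int x) mod int e)"
  have fin: "finite (nodes m lam)" using card_nodes_filter(2)[OF assms, of "\<lambda>_. True"] by simp
  have "count (residues e m lam s) v = card {n \<in> nodes m lam. res n = v}"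
    using fin by (simp add: residues_def res_def count_image_mset Int_def conj_commute)
  then show ?thesis by (simp add: card_nodes_filter(1)[OF assms] res_def)
qed

lemma count_residues_eq_sum_part_residues:
  assumes "\<forall>k<m. \<forall>x\<ge>X. lam k x = 0"
  shows "count (residues e m lam s) v = (\<Sum>k<m. count (part_residues e (lam k) (s k)) v)"
proof -
  have "int (count (part_residues e (lam k) (s k)) v)
      = (\<Sum>x<X. int (card {y. 1 \<le> y \<and> y \<le> lam k x \<and> (s k + int y - int (x + 1)) mod int e = v}))"
    if "k < m" for k
    using int_count_residues[of 1 X "\<lambda>_. lam k" e "\<lambda>_. s k" v] assms that by simp
  then have "int (count (residues e m lam s) v) = int (\<Sum>k<m. count (part_residues e (lam k) (s k)) v)"
    using int_count_residues[OF assms, of e s v] by simp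
  then show ?thesis by (simp only: of_nat_eq_iff)
qed

lemma in_residues_range: "e > 0 \<Longrightarrow> v \<in># residues e m lam s \<Longrightarrow> 0 \<le> v \<and> v < int e"
  by (auto simp: residues_def)

lemma size_part_residues:
  assumes "is_partition la"
  shows "size (part_residues e la t) = part_size la"
proof -
  obtain X where X: "\<forall>x\<ge>X. la x = 0" using is_partition_eventually_zero[OF assms] by blast
  have "size (part_residues e la t) = card {n \<in> nodes 1 (\<lambda>_. la). True}"
    by (simp add: residues_def)
  also have "\<dots> = (\<Sum>x<X. la x)"
  proof -
    have "{y. 1 \<le> y \<and> y \<le> la x} = {1..la x}" for x by auto
    then show ?thesis using card_nodes_filter(1)[of 1 X "\<lambda>_. la" "\<lambda>_. True"] X by simp
  qed
  also have "\<dots> = part_size la"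
    unfolding part_size_def
  proof (rule sum.mono_neutral_right)
    show "{i. la i \<noteq> 0} \<subseteq> {..<X}" using X not_less by blast
  qed auto
  finally show ?thesis .
qed

lemma count_part_residues_floor_sum:
  assumes "e > 0" "0 \<le> v" "v < int e" "is_partition la" "\<forall>z<M. z \<in> beta_set t la"
  shows "int (count (part_residues e la t) v)
       = (\<Sum>b\<in>{b \<in> beta_set t la. M \<le> b}. (b - v) div int e) - (\<Sum>b\<in>{M..<t}. (b - v) div int e)"
proof -
  obtain X where X: "\<forall>x\<ge>X. la x = 0" using is_partition_eventually_zero[OF assms(4)] by blast
  have row: "int (card {y. 1 \<le> y \<and> y \<le> la x \<and> (t + int y - int (x + 1)) mod int e = v})
      = (bead t la x - v) div int e - (t - int x - 1 - v) div int e" for x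
    using card_row_residue[OF assms(1-3), of "la x" "t - int (x + 1)"]
    by (simp add: bead_def algebra_simps)
  have "int (count (part_residues e la t) v)
      = (\<Sum>x<X. int (card {y. 1 \<le> y \<and> y \<le> la x \<and> (t + int y - int (x + 1)) mod int e = v}))"
    using int_count_residues[of 1 X "\<lambda>_. la" e "\<lambda>_. t" v] X by simp
  also have "\<dots> = (\<Sum>x<X. (bead t la x - v) div int e - (t - int x - 1 - v) div int e)"
    by (simp only: row)
  finally show ?thesis by (simp only: sum_beta_set_above_minus_interval[OF assms(4) X assms(5)])
qed

section \<open>Uglov's map\<close>

lemma mult_le_iff_le_zdiv:
  fixes c x d :: int assumes "d > 0"
  shows "c * d \<le> x \<longleftrightarrow> c \<le> x div d"
proof
  assume "c * d \<le> x"
  then have "c * d div d \<le> x div d" using assms by (rule zdiv_mono1)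
  then show "c \<le> x div d" using assms by simp
next
  assume "c \<le> x div d"
  then have "c * d \<le> x div d * d" using assms by simp
  also have "\<dots> \<le> x" using assms by (simp add: minus_mod_eq_div_mult[symmetric])
  finally show "c * d \<le> x" .
qed

lemma uglov_psi_div_mod:
  assumes "e > 0"
  shows "uglov_psi e r k b div int e = (b div int e + 1) * int r - int k"
    and "uglov_psi e r k b mod int e = b mod int e"
  using assms by (simp_all add: uglov_psi_def)

text \<open>In base \<open>e\<close>, then \<open>r\<close>: the runner index \<open>b mod e\<close> is kept, the level \<open>b div e\<close> is
  spread out by a factor \<open>r\<close>, and the component \<open>k\<close> is recorded as \<open>r - k\<close>.\<close>
lemma uglov_psi_div_div_mod:
  assumes "e > 0" "1 \<le> k" "k \<le> r"
  shows "uglov_psi e r k b div int e div int r = b div int e"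
    and "uglov_psi e r k b div int e mod int r = int r - int k"
proof -
  define d where "d = int r - int k"
  have eq: "uglov_psi e r k b div int e = d + b div int e * int r"
    using assms(1) by (simp add: uglov_psi_div_mod d_def algebra_simps)
  have "0 \<le> d" "d < int r" using assms(2,3) by (simp_all add: d_def)
  then show "uglov_psi e r k b div int e div int r = b div int e"
    and "uglov_psi e r k b div int e mod int r = int r - int k"
    unfolding eq by (simp_all add: d_def[symmetric] div_pos_pos_trivial)
qed

lemma uglov_psi_inject:
  assumes "e > 0" "1 \<le> k" "k \<le> r" "1 \<le> k'" "k' \<le> r"
  shows "uglov_psi e r k b = uglov_psi e r k' b' \<longleftrightarrow> k = k' \<and> b = b'"
proof
  assume eq: "uglov_psi e r k b = uglov_psi e r k' b'"
  have "k = k'"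
    using uglov_psi_div_div_mod(2)[OF assms(1-3), of b] uglov_psi_div_div_mod(2)[OF assms(1,4,5), of b'] eq
    by simp
  moreover have "b div int e = b' div int e" "b mod int e = b' mod int e"
    using uglov_psi_div_div_mod(1)[OF assms(1-3), of b] uglov_psi_div_div_mod(1)[OF assms(1,4,5), of b']
      uglov_psi_div_mod(2)[OF assms(1)] eq by metis+
  then have "b = b'" by (metis div_mult_mod_eq)
  ultimately show "k = k' \<and> b = b'" ..
qed simp

lemma uglov_psi_surj:
  assumes "e > 0" "r \<ge> 1"
  shows "\<exists>k b. 1 \<le> k \<and> k \<le> r \<and> uglov_psi e r k b = z"
proof -
  define A where "A = z div int e"
  define k where "k = r - nat (A mod int r)"
  define b where "b = A div int r * int e + z mod int e"
  have A: "0 \<le> A mod int r" "A mod int r < int r" using assms(2) by simp_all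
  then have k: "int k = int r - A mod int r" by (simp add: k_def)
  have "b div int e = A div int r" "b mod int e = z mod int e" using assms(1) by (simp_all add: b_def)
  then have "uglov_psi e r k b = ((A div int r + 1) * int r - int k) * int e + z mod int e"
    by (simp add: uglov_psi_def)
  also have "(A div int r + 1) * int r - int k = A"
  proof -
    have "(A div int r + 1) * int r = int r * (A div int r) + int r" by (simp add: algebra_simps)
    then show ?thesis using k mult_div_mod_eq[of "int r" A] by linarith
  qed
  finally have "uglov_psi e r k b = z" by (simp add: A_def)
  then show ?thesis using k A by (intro exI[of _ k] exI[of _ b]) auto
qed

lemma uglov_psi_ge_iff:
  assumes "e > 0" "1 \<le> k" "k \<le> r"
  shows "a * int r * int e \<le> uglov_psi e r k b \<longleftrightarrow> a * int e \<le> b"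
proof -
  have "int r > 0" using assms by simp
  have "a * int r * int e \<le> uglov_psi e r k b \<longleftrightarrow> a * int r \<le> uglov_psi e r k b div int e"
    using assms(1) by (simp add: mult_le_iff_le_zdiv)
  also have "\<dots> \<longleftrightarrow> a \<le> uglov_psi e r k b div int e div int r"
    using \<open>int r > 0\<close> by (rule mult_le_iff_le_zdiv)
  also have "\<dots> \<longleftrightarrow> a * int e \<le> b"
    using assms by (simp add: uglov_psi_div_div_mod mult_le_iff_le_zdiv)
  finally show ?thesis .
qed

lemma uglov_psi_floor:
  assumes "e > 0"
  shows "(uglov_psi e r k b - v) div int e = (b - v) div int e + (int r - 1) * (b div int e) + (int r - int k)"
proof -
  have "uglov_psi e r k b - v = (b - v) + ((int r - 1) * (b div int e) + (int r - int k)) * int e"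
    using div_mult_mod_eq[of b "int e"] by (simp add: uglov_psi_def algebra_simps)
  then show ?thesis unfolding \<open>uglov_psi e r k b - v = _\<close>
    using assms by (subst div_mult_self1) (simp_all add: algebra_simps)
qed

lemma uglov_union_contains_below:
  assumes "e > 0" "r \<ge> 1" "\<forall>k<r. \<forall>z<a * int e. z \<in> B k"
  shows "\<forall>z<a * int r * int e. z \<in> (\<Union>k<r. uglov_psi e r (k + 1) ` B k)"
proof (intro allI impI)
  fix z assume z: "z < a * int r * int e"
  obtain k b where kb: "1 \<le> k" "k \<le> r" "uglov_psi e r k b = z"
    using uglov_psi_surj[OF assms(1,2)] by blast
  then have "b < a * int e" using z uglov_psi_ge_iff[OF assms(1) kb(1,2), of a b] by linarith
  then have "b \<in> B (k - 1)" using assms(3) kb by simp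
  then show "z \<in> (\<Union>k<r. uglov_psi e r (k + 1) ` B k)"
    using kb by (intro UN_I[of "k - 1"]) auto
qed

lemma uglov_union_above_eq:
  assumes "e > 0"
  shows "{b \<in> (\<Union>k<r. uglov_psi e r (k + 1) ` B k). a * int r * int e \<le> b}
       = (\<Union>k<r. uglov_psi e r (k + 1) ` {b \<in> B k. a * int e \<le> b})"
  using uglov_psi_ge_iff[OF assms] by fastforce

lemma sum_uglov_union_above:
  fixes g :: "int \<Rightarrow> 'a::comm_monoid_add"
  assumes "e > 0" "\<forall>k<r. finite {b \<in> B k. a * int e \<le> b}"
  shows "(\<Sum>b\<in>{b \<in> (\<Union>k<r. uglov_psi e r (k + 1) ` B k). a * int r * int e \<le> b}. g b)
       = (\<Sum>k<r. \<Sum>b\<in>{b \<in> B k. a * int e \<le> b}. g (uglov_psi e r (k + 1) b))"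
proof -
  have inj: "uglov_psi e r (i + 1) b = uglov_psi e r (j + 1) b' \<longleftrightarrow> i = j \<and> b = b'"
    if "i < r" "j < r" for i j b b'
    using uglov_psi_inject[OF assms(1), of "i + 1" r "j + 1"] that by simp
  have "(\<Sum>b\<in>(\<Union>k<r. uglov_psi e r (k + 1) ` {b \<in> B k. a * int e \<le> b}). g b)
      = (\<Sum>k<r. \<Sum>b\<in>uglov_psi e r (k + 1) ` {b \<in> B k. a * int e \<le> b}. g b)"
    using assms(2) inj by (intro sum.UNION_disjoint) auto
  also have "\<dots> = (\<Sum>k<r. \<Sum>b\<in>{b \<in> B k. a * int e \<le> b}. g (uglov_psi e r (k + 1) b))"
    using inj by (intro sum.cong refl sum.reindex_cong[OF inj_onI]) auto
  finally show ?thesis by (simp only: uglov_union_above_eq[OF assms(1)])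
qed

lemma multipartition_beta_sets_contain_below:
  assumes "e > 0" "is_multipartition r lam"
  shows "\<exists>a. \<forall>k<r. \<forall>z<a * int e. z \<in> beta_set (s k) (lam k)"
proof -
  obtain X where X: "\<forall>k<r. \<forall>x\<ge>X. lam k x = 0"
    using is_multipartition_eventually_zero[OF assms(2)] by blast
  define a where "a = - (\<Sum>k<r. \<bar>s k\<bar>) - int X"
  have "a * int e \<le> s k - int X" if "k < r" for k
  proof -
    have "\<bar>s k\<bar> \<le> (\<Sum>k<r. \<bar>s k\<bar>)" using that by (intro member_le_sum) auto
    then have "a \<le> s k - int X" "a \<le> 0" by (auto simp: a_def)
    moreover have "a * int e \<le> a * 1"
      using mult_left_mono_neg[of 1 "int e" a] \<open>a \<le> 0\<close> assms(1) by simp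
    ultimately show ?thesis by linarith
  qed
  then have "\<forall>k<r. \<forall>z<a * int e. z \<in> beta_set (s k) (lam k)"
    using X beta_set_contains_below by fastforce
  then show ?thesis ..
qed

lemma uglov_beta_contains_below:
  assumes "e > 0" "r \<ge> 1" "\<forall>k<r. \<forall>z<a * int e. z \<in> beta_set (s k) (lam k)"
  shows "\<forall>z<a * int r * int e. z \<in> uglov_beta e r lam s"
  unfolding uglov_beta_def using uglov_union_contains_below[OF assms] .

lemma uglov_beta_above_eq:
  assumes "e > 0"
  shows "{b \<in> uglov_beta e r lam s. a * int r * int e \<le> b}
       = (\<Union>k<r. uglov_psi e r (k + 1) ` {b \<in> beta_set (s k) (lam k). a * int e \<le> b})"
  unfolding uglov_beta_def by (rule uglov_union_above_eq[OF assms])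

lemma uglov_Psi_beta_set:
  assumes "e > 0" "r \<ge> 1" "is_multipartition r lam"
  shows "is_partition (fst (uglov_Psi e r lam s))"
    and "beta_set (snd (uglov_Psi e r lam s)) (fst (uglov_Psi e r lam s)) = uglov_beta e r lam s"
proof -
  obtain a where a: "\<forall>k<r. \<forall>z<a * int e. z \<in> beta_set (s k) (lam k)"
    using multipartition_beta_sets_contain_below[OF assms(1,3)] by blast
  have "finite {b \<in> uglov_beta e r lam s. a * int r * int e \<le> b}"
    using assms(3) finite_beta_set_above
    by (auto simp: uglov_beta_above_eq[OF assms(1)] is_multipartition_def)
  with uglov_beta_contains_below[OF assms(1,2) a]
  have "\<exists>!p. is_partition (fst p) \<and> beta_set (snd p) (fst p) = uglov_beta e r lam s"
    by (rule ex1_beta_set_pair)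
  then have "is_partition (fst (uglov_Psi e r lam s))
      \<and> beta_set (snd (uglov_Psi e r lam s)) (fst (uglov_Psi e r lam s)) = uglov_beta e r lam s"
    unfolding uglov_Psi_def by (rule theI')
  then show "is_partition (fst (uglov_Psi e r lam s))"
    and "beta_set (snd (uglov_Psi e r lam s)) (fst (uglov_Psi e r lam s)) = uglov_beta e r lam s"
    by simp_all
qed

lemma sum_uglov_beta_above:
  assumes "e > 0" "is_multipartition r lam"
  shows "(\<Sum>b\<in>{b \<in> uglov_beta e r lam s. a * int r * int e \<le> b}. g b)
       = (\<Sum>k<r. \<Sum>b\<in>{b \<in> beta_set (s k) (lam k). a * int e \<le> b}. g (uglov_psi e r (k + 1) b))"
  unfolding uglov_beta_def
  using assms finite_beta_set_above by (intro sum_uglov_union_above) (auto simp: is_multipartition_def)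

lemma snd_uglov_Psi:
  assumes "e > 0" "r \<ge> 1" "is_multipartition r lam"
  shows "snd (uglov_Psi e r lam s) = (\<Sum>k<r. s k)"
proof -
  obtain a where a: "\<forall>k<r. \<forall>z<a * int e. z \<in> beta_set (s k) (lam k)"
    using multipartition_beta_sets_contain_below[OF assms(1,3)] by blast
  obtain la t where Psi: "uglov_Psi e r lam s = (la, t)" by (cases "uglov_Psi e r lam s")
  have la: "is_partition la" "beta_set t la = uglov_beta e r lam s"
    using uglov_Psi_beta_set[OF assms, of s] Psi by simp_all
  have part: "is_partition (lam k)" if "k < r" for k
    using assms(3) that by (simp add: is_multipartition_def)
  have "t - a * int r * int e = int (card {b \<in> uglov_beta e r lam s. a * int r * int e \<le> b})"
    using card_beta_set_above[OF la(1), of "a * int r * int e" t]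
      uglov_beta_contains_below[OF assms(1,2) a] la(2) by simp
  also have "\<dots> = (\<Sum>k<r. int (card {b \<in> beta_set (s k) (lam k). a * int e \<le> b}))"
    using sum_uglov_beta_above[OF assms(1,3), where a=a and s=s and g="\<lambda>_. 1 :: int"] by simp
  also have "\<dots> = (\<Sum>k<r. s k - a * int e)"
    using card_beta_set_above[OF part] a by simp
  finally show ?thesis using Psi by (simp add: sum_subtractf)
qed

lemma sum_floor_uglov_psi_beta_set_above:
  assumes "e > 0" "0 \<le> v" "v < int e" "is_partition la" "\<forall>z<a * int e. z \<in> beta_set t la"
  shows "(\<Sum>b\<in>{b \<in> beta_set t la. a * int e \<le> b}. (uglov_psi e r k b - v) div int e)
       = int (count (part_residues e la t) v) + (int r - 1) * int (count (part_residues e la t) 0)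
         + (\<Sum>b\<in>{a * int e..<t}. (b - v) div int e) + (int r - 1) * (\<Sum>b\<in>{a * int e..<t}. b div int e)
         + (int r - int k) * (t - a * int e)"
proof -
  let ?S = "{b \<in> beta_set t la. a * int e \<le> b}"
  have "(\<Sum>b\<in>?S. (uglov_psi e r k b - v) div int e)
      = (\<Sum>b\<in>?S. (b - v) div int e) + (int r - 1) * (\<Sum>b\<in>?S. b div int e)
        + (int r - int k) * int (card ?S)"
    by (simp add: uglov_psi_floor[OF assms(1)] sum.distrib sum_distrib_left)
  also have "\<dots> = int (count (part_residues e la t) v) + (\<Sum>b\<in>{a * int e..<t}. (b - v) div int e)
      + (int r - 1) * (int (count (part_residues e la t) 0) + (\<Sum>b\<in>{a * int e..<t}. b div int e))
      + (int r - int k) * (t - a * int e)"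
    using count_part_residues_floor_sum[OF assms(1-4,5)] count_part_residues_floor_sum[OF assms(1) _ _ assms(4,5)]
      card_beta_set_above[OF assms(4,5)] assms(1) by simp
  finally show ?thesis by (simp add: algebra_simps)
qed

text \<open>The contribution of the charge alone to a residue count of \<open>\<Psi>\<^sub>r(\<lambda>, s)\<close>; it is
  computed with respect to a cut-off \<open>a\<close> below which all components are full.\<close>
definition uglov_residue_offset :: "nat \<Rightarrow> nat \<Rightarrow> (nat \<Rightarrow> int) \<Rightarrow> int \<Rightarrow> int \<Rightarrow> int" where
  "uglov_residue_offset e r s a v =
     (\<Sum>k<r. (\<Sum>b\<in>{a * int e..<s k}. (b - v) div int e) + (int r - 1) * (\<Sum>b\<in>{a * int e..<s k}. b div int e)
            + (int r - int (k + 1)) * (s k - a * int e))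
     - (\<Sum>b\<in>{a * int r * int e..<(\<Sum>k<r. s k)}. (b - v) div int e)"

lemma count_uglov_Psi_residues:
  assumes "e > 0" "r \<ge> 1" "is_multipartition r lam"
    and a: "\<forall>k<r. \<forall>z<a * int e. z \<in> beta_set (s k) (lam k)" and "0 \<le> v" "v < int e"
  shows "int (count (part_residues e (fst (uglov_Psi e r lam s)) (snd (uglov_Psi e r lam s))) v)
       = int (count (residues e r lam s) v) + (int r - 1) * int (count (residues e r lam s) 0)
         + uglov_residue_offset e r s a v"
proof -
  obtain la t where Psi: "uglov_Psi e r lam s = (la, t)" by (cases "uglov_Psi e r lam s")
  have la: "is_partition la" "beta_set t la = uglov_beta e r lam s" "t = (\<Sum>k<r. s k)"
    using uglov_Psi_beta_set[OF assms(1-3), of s] snd_uglov_Psi[OF assms(1-3), of s] Psi by simp_all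
  obtain X where X: "\<forall>k<r. \<forall>x\<ge>X. lam k x = 0"
    using is_multipartition_eventually_zero[OF assms(3)] by blast
  have part: "is_partition (lam k)" if "k < r" for k
    using assms(3) that by (simp add: is_multipartition_def)
  define c where "c k w = int (count (part_residues e (lam k) (s k)) w)" for k w
  define F where "F k = (\<Sum>b\<in>{a * int e..<s k}. (b - v) div int e)
      + (int r - 1) * (\<Sum>b\<in>{a * int e..<s k}. b div int e) + (int r - int (k + 1)) * (s k - a * int e)" for k
  have count: "int (count (residues e r lam s) w) = (\<Sum>k<r. c k w)" for w
    by (simp add: count_residues_eq_sum_part_residues[OF X] c_def)
  have "int (count (part_residues e la t) v)
      = (\<Sum>b\<in>{b \<in> uglov_beta e r lam s. a * int r * int e \<le> b}. (b - v) div int e)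
        - (\<Sum>b\<in>{a * int r * int e..<t}. (b - v) div int e)"
    using count_part_residues_floor_sum[OF assms(1,5,6) la(1)] la(2)
      uglov_beta_contains_below[OF assms(1,2) a] by simp
  also have "(\<Sum>b\<in>{b \<in> uglov_beta e r lam s. a * int r * int e \<le> b}. (b - v) div int e)
      = (\<Sum>k<r. c k v + (int r - 1) * c k 0 + F k)"
    unfolding sum_uglov_beta_above[OF assms(1,3)]
  proof (rule sum.cong[OF refl])
    fix k assume "k \<in> {..<r}"
    then have k: "k < r" "\<forall>z<a * int e. z \<in> beta_set (s k) (lam k)" using a by simp_all
    show "(\<Sum>b\<in>{b \<in> beta_set (s k) (lam k). a * int e \<le> b}. (uglov_psi e r (k + 1) b - v) div int e)
        = c k v + (int r - 1) * c k 0 + F k"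
      using sum_floor_uglov_psi_beta_set_above[OF assms(1,5,6) part[OF k(1)] k(2), where r=r and k="k + 1"]
      by (simp add: c_def F_def)
  qed
  also have "\<dots> = (\<Sum>k<r. c k v) + (int r - 1) * (\<Sum>k<r. c k 0) + (\<Sum>k<r. F k)"
    by (simp add: sum.distrib sum_distrib_left)
  finally show ?thesis
    using Psi la(3) by (simp add: count uglov_residue_offset_def F_def)
qed

lemma uglov_Psi_residues_eq:
  assumes "e > 0" "r \<ge> 1" "is_multipartition r lam" "is_multipartition r mu"
    and "residues e r lam s = residues e r mu s"
  shows "part_residues e (fst (uglov_Psi e r lam s)) (snd (uglov_Psi e r lam s))
       = part_residues e (fst (uglov_Psi e r mu s)) (snd (uglov_Psi e r mu s))"
proof (rule multiset_eqI)
  fix v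
  obtain a1 where a1: "\<forall>k<r. \<forall>z<a1 * int e. z \<in> beta_set (s k) (lam k)"
    using multipartition_beta_sets_contain_below[OF assms(1,3)] by blast
  obtain a2 where a2: "\<forall>k<r. \<forall>z<a2 * int e. z \<in> beta_set (s k) (mu k)"
    using multipartition_beta_sets_contain_below[OF assms(1,4)] by blast
  define a where "a = min a1 a2"
  have "a * int e \<le> a1 * int e" "a * int e \<le> a2 * int e"
    by (simp_all add: a_def mult_right_mono)
  then have lam_a: "\<forall>k<r. \<forall>z<a * int e. z \<in> beta_set (s k) (lam k)"
    and mu_a: "\<forall>k<r. \<forall>z<a * int e. z \<in> beta_set (s k) (mu k)"
    using a1 a2 by fastforce+
  show "count (part_residues e (fst (uglov_Psi e r lam s)) (snd (uglov_Psi e r lam s))) v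
      = count (part_residues e (fst (uglov_Psi e r mu s)) (snd (uglov_Psi e r mu s))) v"
  proof (cases "0 \<le> v \<and> v < int e")
    case True
    then show ?thesis
      using count_uglov_Psi_residues[OF assms(1-3) lam_a, of v]
        count_uglov_Psi_residues[OF assms(1,2,4) mu_a, of v] assms(5) by simp
  next
    case False
    then show ?thesis using in_residues_range[OF assms(1)] by (metis count_eq_zero_iff)
  qed
qed

theorem proposition2p8:
  fixes e r :: nat and lam mu :: "nat \<Rightarrow> nat \<Rightarrow> nat" and s :: "nat \<Rightarrow> int"
  assumes "e \<ge> 2" and "r \<ge> 1"
    and "is_multipartition r lam" and "is_multipartition r mu"
    and "block_equiv e r (lam, s) (mu, s)"
  shows "block_equiv e 1 (as_single (uglov_Psi e r lam s)) (as_single (uglov_Psi e r mu s))"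
proof -
  have "e > 0" using assms(1) by simp
  note lam = uglov_Psi_beta_set(1)[OF \<open>e > 0\<close> assms(2,3)] snd_uglov_Psi[OF \<open>e > 0\<close> assms(2,3)]
  note mu = uglov_Psi_beta_set(1)[OF \<open>e > 0\<close> assms(2,4)] snd_uglov_Psi[OF \<open>e > 0\<close> assms(2,4)]
  have "residues e r lam s = residues e r mu s"
    using assms(5) by (simp add: block_equiv_def)
  then have res: "part_residues e (fst (uglov_Psi e r lam s)) (snd (uglov_Psi e r lam s))
      = part_residues e (fst (uglov_Psi e r mu s)) (snd (uglov_Psi e r mu s))"
    by (rule uglov_Psi_residues_eq[OF \<open>e > 0\<close> assms(2-4)])
  then have "part_size (fst (uglov_Psi e r lam s)) = part_size (fst (uglov_Psi e r mu s))"
    using size_part_residues[OF lam(1)] size_part_residues[OF mu(1)] by metis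
  then show ?thesis
    using lam mu res by (simp add: block_equiv_def as_single_def is_multipartition_def multi_size_def)
qed

end
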